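(* Let $\mathcal{R}=\{P_1,\dots,P_n\}$ be a set of $n$ pairwise disjoint, connected, $\alpha$-fat simple polygons in the plane, and let $T^*$ be an optimal (minimum-length) tour of $\mathcal{R}$. Then $T^*$ is a simple polygon having at most $n$ vertices.
   Context: A region $P$ is $\alpha$-fat (for a fixed constant $\alpha>0$) if $\mathrm{area}(P)\ge \alpha\,[\mathrm{diam}(P)]^2$. A tour of $\mathcal{R}$ is a closed curve in the plane that intersects (visits) every region $P_i$; its length is its Euclidean length. An optimal tour is a tour of minimum length among all tours of $\mathcal{R}$ (the TSP with neighborhoods). *)

theory Defs
  imports "HOL-Analysis.Analysis"
begin

fun polypath :: "(real^2) list \<Rightarrow> real \<Rightarrow> real^2" where
  "polypath [] = linepath 0 0"
| "polypath [a] = linepath a a"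
| "polypath [a, b] = linepath a b"
| "polypath (a # b # c # xs) = linepath a b +++ polypath (b # c # xs)"

definition closed_polypath :: "(real^2) list \<Rightarrow> real \<Rightarrow> real^2" where
  "closed_polypath vs = polypath (vs @ [hd vs])"

definition simple_polygon_curve :: "(real^2) list \<Rightarrow> bool" where
  "simple_polygon_curve vs \<longleftrightarrow> length vs \<ge> 3 \<and> simple_path (closed_polypath vs)"

definition simple_polygon :: "(real^2) set \<Rightarrow> bool" where
  "simple_polygon P \<longleftrightarrow> (\<exists>vs. simple_polygon_curve vs \<and>
      P = path_image (closed_polypath vs) \<union> inside (path_image (closed_polypath vs)))"

definition fat :: "real \<Rightarrow> (real^2) set \<Rightarrow> bool" where
  "fat \<alpha> P \<longleftrightarrow> measure lebesgue P \<ge> \<alpha> * (diameter P)\<^sup>2"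

definition curve_length :: "(real \<Rightarrow> real^2) \<Rightarrow> ereal" where
  "curve_length g = (SUP ts \<in> {ts. sorted ts \<and> ts \<noteq> [] \<and> hd ts = 0 \<and> last ts = 1}.
      ereal (\<Sum>i < length ts - 1. dist (g (ts ! i)) (g (ts ! Suc i))))"

definition is_tour :: "nat \<Rightarrow> (nat \<Rightarrow> (real^2) set) \<Rightarrow> (real \<Rightarrow> real^2) \<Rightarrow> bool" where
  "is_tour n P g \<longleftrightarrow> path g \<and> pathfinish g = pathstart g \<and>
      (\<forall>i<n. path_image g \<inter> P i \<noteq> {})"

definition optimal_tour :: "nat \<Rightarrow> (nat \<Rightarrow> (real^2) set) \<Rightarrow> (real \<Rightarrow> real^2) \<Rightarrow> bool" where
  "optimal_tour n P g \<longleftrightarrow> is_tour n P g \<and>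
      (\<forall>h. is_tour n P h \<longrightarrow> curve_length g \<le> curve_length h)"

end

theory Submission
  imports Defs
begin

text \<open>Pick in every region a point of the optimal tour T. The regions being disjoint, these are
  n distinct points, and listing them in the order in which T meets them gives a closed polygon Q.
  Every closed polygon through the points is a tour, while every polygon inscribed in T is at
  most as long as T; hence T has the length of Q, and Q is a shortest closed polygon through the
  points. Since inserting any further point of T into Q cannot make it longer, each arc of T
  between consecutive points lies on the straight segment joining them, so T and Q have the same
  image. If Q is not simple, splitting it at a double point z yields a closed polygon z, A, z, B
  through the same points and no longer than Q; for such a shortest figure-eight the triangle
  inequality at z forces z onto the segments joining the ends of the loops, and an induction on
  the loops shows that all vertices are collinear. So either the points are collinear and T
  traverses a segment, a polygon with two vertices, or Q is simple.\<close>

section \<open>Lengths of closed polygons\<close>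

fun polyline_length :: "'a::metric_space list \<Rightarrow> real" where
  "polyline_length (a # b # xs) = dist a b + polyline_length (b # xs)"
| "polyline_length _ = 0"

definition polygon_length :: "'a::metric_space list \<Rightarrow> real" where
  "polygon_length xs = polyline_length (xs @ [hd xs])"

lemma polyline_length_Cons:
  "xs \<noteq> [] \<Longrightarrow> polyline_length (a # xs) = dist a (hd xs) + polyline_length xs"
  by (cases xs) auto

lemma polyline_length_append:
  "xs \<noteq> [] \<Longrightarrow> ys \<noteq> [] \<Longrightarrow>
   polyline_length (xs @ ys) = polyline_length xs + dist (last xs) (hd ys) + polyline_length ys"
proof (induction xs rule: polyline_length.induct)
  case (1 a b xs)
  then show ?case by (cases xs) (auto simp: polyline_length_Cons)
next
  case ("2_2" v)
  then show ?case by (auto simp: polyline_length_Cons)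
qed auto

lemma polyline_length_snoc:
  "xs \<noteq> [] \<Longrightarrow> polyline_length (xs @ [p]) = polyline_length xs + dist (last xs) p"
  using polyline_length_append[of xs "[p]"] by simp

lemma polyline_length_rev: "polyline_length (rev xs) = polyline_length xs"
proof (induction xs rule: polyline_length.induct)
  case (1 a b xs)
  have "polyline_length (rev xs @ [b, a]) = polyline_length (rev xs @ [b]) + dist b a"
    using polyline_length_snoc[of "rev xs @ [b]" a] by simp
  then show ?case using 1 by (simp add: dist_commute)
qed auto

lemma polyline_length_split:
  "polyline_length (xs @ p # ys) = polyline_length (xs @ [p]) + polyline_length (p # ys)"
  by (cases "xs = []") (simp_all add: polyline_length_append polyline_length_snoc)

lemma polyline_length_insert_ge: "polyline_length (xs @ ys) \<le> polyline_length (xs @ p # ys)"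
proof (cases "xs = [] \<or> ys = []")
  case True
  then show ?thesis
    by (cases "xs = []"; cases ys) (auto simp: polyline_length_Cons polyline_length_snoc)
next
  case False
  then show ?thesis
    using dist_triangle[of "last xs" "hd ys" p]
    by (simp add: polyline_length_append polyline_length_Cons)
qed

lemma polygon_length_conv:
  "xs \<noteq> [] \<Longrightarrow> polygon_length xs = polyline_length xs + dist (last xs) (hd xs)"
  by (simp add: polygon_length_def polyline_length_snoc)

lemma polygon_length_rotate: "polygon_length (xs @ ys) = polygon_length (ys @ xs)"
  by (cases "xs = [] \<or> ys = []")
    (auto simp: polygon_length_conv polyline_length_append dist_commute)

lemma polygon_length_rev: "polygon_length (rev xs) = polygon_length xs"
  by (cases "xs = []")
    (simp_all add: polygon_length_conv polyline_length_rev hd_rev last_rev dist_commute)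

lemma polygon_length_remdup_adj: "polygon_length (xs @ a # a # ys) = polygon_length (xs @ a # ys)"
proof -
  have "polyline_length (zs @ a # a # ws) = polyline_length (zs @ a # ws)" for zs ws
    by (induction zs rule: polyline_length.induct) auto
  moreover have "hd (xs @ a # a # ys) = hd (xs @ a # ys)" by (cases xs) auto
  ultimately show ?thesis unfolding polygon_length_def by (metis append.assoc append_Cons)
qed

lemma polygon_length_figure8:
  "A \<noteq> [] \<Longrightarrow> B \<noteq> [] \<Longrightarrow> polygon_length (z # A @ z # B) =
   dist z (hd A) + polyline_length A + dist (last A) z +
   dist z (hd B) + polyline_length B + dist (last B) z"
  by (simp add: polygon_length_conv polyline_length_append polyline_length_Cons)

lemma closed_segment_if_dist_add_le:
  fixes a b z :: "'a::euclidean_space"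
  shows "dist a z + dist z b \<le> dist a b \<Longrightarrow> z \<in> closed_segment a b"
  by (metis antisym between between_mem_segment dist_triangle)

lemma in_segment_if_insertion_not_longer:
  fixes p :: "'a::euclidean_space"
  shows "U \<noteq> [] \<Longrightarrow> V \<noteq> [] \<Longrightarrow> polygon_length (U @ p # V) \<le> polygon_length (U @ V) \<Longrightarrow>
    p \<in> closed_segment (last U) (hd V)"
  by (intro closed_segment_if_dist_add_le)
    (simp add: polygon_length_conv polyline_length_append polyline_length_Cons)

lemma in_closing_segment_if_insertion_not_longer:
  fixes p :: "'a::euclidean_space"
  shows "V \<noteq> [] \<Longrightarrow> polygon_length (p # V) \<le> polygon_length V \<Longrightarrow>
    p \<in> closed_segment (last V) (hd V)"
  by (intro closed_segment_if_dist_add_le)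
    (simp add: polygon_length_conv polyline_length_Cons dist_commute)

section \<open>Shortest figure-eights are collinear\<close>

definition min_figure8 :: "'a::euclidean_space set \<Rightarrow> 'a \<Rightarrow> 'a list \<Rightarrow> 'a list \<Rightarrow> bool" where
  "min_figure8 Q z A B \<longleftrightarrow> (\<exists>x\<in>set A. x \<noteq> z) \<and> (\<exists>x\<in>set B. x \<noteq> z) \<and>
     Q \<subseteq> set (z # A @ z # B) \<and>
     (\<forall>r. Q \<subseteq> set r \<longrightarrow> polygon_length (z # A @ z # B) \<le> polygon_length r)"

lemma min_figure8_nonempty: "min_figure8 Q z A B \<Longrightarrow> A \<noteq> [] \<and> B \<noteq> []"
  unfolding min_figure8_def by auto

lemma min_figure8_le:
  "min_figure8 Q z A B \<Longrightarrow> set r = set (z # A @ z # B) \<Longrightarrow>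
   polygon_length (z # A @ z # B) \<le> polygon_length r"
  unfolding min_figure8_def by metis

text \<open>Each junction inequality compares the figure-eight with a reconnection of its loops
  that skips one of the two visits of z, possibly reversing a loop.\<close>

lemma min_figure8_junctions:
  assumes "min_figure8 Q z A B"
  shows "z \<in> closed_segment (last B) (hd A)" "z \<in> closed_segment (last B) (last A)"
    "z \<in> closed_segment (hd A) (hd B)" "z \<in> closed_segment (last A) (hd B)"
proof -
  have ne: "A \<noteq> []" "B \<noteq> []" using min_figure8_nonempty[OF assms] by auto
  have "polygon_length (z # A @ z # B) \<le> polygon_length (A @ z # B)"
    "polygon_length (z # A @ z # B) \<le> polygon_length (z # B @ rev A)"
    "polygon_length (z # A @ z # B) \<le> polygon_length (z # rev A @ B)"
    "polygon_length (z # A @ z # B) \<le> polygon_length (z # A @ B)"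
    by (rule min_figure8_le[OF assms]; auto)+
  then show "z \<in> closed_segment (last B) (hd A)" "z \<in> closed_segment (last B) (last A)"
    "z \<in> closed_segment (hd A) (hd B)" "z \<in> closed_segment (last A) (hd B)"
    using ne by (auto intro!: closed_segment_if_dist_add_le
        simp: polygon_length_figure8 polygon_length_conv polyline_length_append
          polyline_length_Cons polyline_length_rev hd_rev last_rev dist_commute)
qed

lemma min_figure8_cong:
  assumes "min_figure8 Q z A B" "\<exists>x\<in>set A'. x \<noteq> z'" "\<exists>x\<in>set B'. x \<noteq> z'"
    and "set (z' # A' @ z' # B') = set (z # A @ z # B)"
    and "polygon_length (z' # A' @ z' # B') = polygon_length (z # A @ z # B)"
  shows "min_figure8 Q z' A' B'"
  using assms unfolding min_figure8_def by metis

lemma min_figure8_rev: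
  assumes "min_figure8 Q z A B"
  shows "min_figure8 Q z (rev A) (rev B)"
proof (rule min_figure8_cong[OF assms])
  have "polygon_length (z # rev A @ z # rev B) = polygon_length (rev B @ z # rev A @ [z])"
    using polygon_length_rotate[of "z # rev A @ [z]" "rev B"] by simp
  also have "\<dots> = polygon_length (z # A @ z # B)"
    using polygon_length_rev[of "z # A @ z # B"] by simp
  finally show "polygon_length (z # rev A @ z # rev B) = polygon_length (z # A @ z # B)" .
qed (use assms in \<open>auto simp: min_figure8_def\<close>)

lemma min_figure8_swap:
  assumes "min_figure8 Q z A B"
  shows "min_figure8 Q z B A"
  by (rule min_figure8_cong[OF assms])
    (use assms polygon_length_rotate[of "z # A" "z # B"] in \<open>auto simp: min_figure8_def\<close>)

lemma min_figure8_drop_adjacent: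
  assumes "min_figure8 Q z A B" "\<exists>x\<in>set A'. x \<noteq> z" "\<exists>x\<in>set B'. x \<noteq> z"
    and "z # A @ z # B = xs @ a # a # ys" "z # A' @ z # B' = xs @ a # ys"
  shows "min_figure8 Q z A' B'"
  by (rule min_figure8_cong[OF assms(1-3)])
    (use assms(4,5) polygon_length_remdup_adj[of xs a ys] in \<open>simp_all\<close>)

lemma collinear_Un_share_two:
  assumes "collinear S" "collinear T" "a \<in> S \<inter> T" "b \<in> S \<inter> T" "a \<noteq> b"
  shows "collinear (S \<union> T)"
proof -
  have "collinear {a, b, x}" if "x \<in> S \<union> T" for x
    using that assms by (auto intro: collinear_subset[OF assms(1)] collinear_subset[OF assms(2)])
  then have "collinear (insert a (insert b (S \<union> T)))"
    using collinear_triples[OF assms(5)] by blast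
  moreover have "insert a (insert b (S \<union> T)) = S \<union> T" using assms by auto
  ultimately show ?thesis by simp
qed

lemma collinear_insert_if_collinear_triple:
  assumes "collinear S" "a \<in> S" "b \<in> S" "a \<noteq> b" "collinear {a, b, c}"
  shows "collinear (insert c S)"
  using collinear_Un_share_two[OF assms(1,5), of a b] assms(2-4)
  by (simp add: insert_absorb insert_commute)

lemma closed_segment_collinear: "z \<in> closed_segment a b \<Longrightarrow> collinear {a, b, z}"
  by (rule collinear_subset[OF collinear_closed_segment[of a b]]) auto

lemma segment_ray_cases:
  fixes a b c z :: "'a::real_vector"
  assumes "b \<noteq> z" "a \<noteq> z" "c \<noteq> z" "z \<in> closed_segment b a" "z \<in> closed_segment b c"
  shows "a \<in> closed_segment z c \<or> c \<in> closed_segment z a"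
proof -
  have on_ray: "\<exists>l>0. x = z + l *\<^sub>R (z - b)" if x: "x \<noteq> z" "z \<in> closed_segment b x" for x
  proof -
    obtain u where u: "0 \<le> u" "u \<le> 1" "z = (1 - u) *\<^sub>R b + u *\<^sub>R x"
      using x(2) by (auto simp: in_segment)
    have "u \<noteq> 0" using u assms(1) by auto
    moreover have "u \<noteq> 1" using u x(1) by auto
    moreover have "u *\<^sub>R (x - z) = (1 - u) *\<^sub>R (z - b)" using u(3) by (simp add: algebra_simps)
    ultimately have "x - z = ((1 - u) / u) *\<^sub>R (z - b)"
      by (metis (no_types) scaleR_scaleR divide_inverse_commute eq_vector_fraction_iff)
    then have "x = z + ((1 - u) / u) *\<^sub>R (z - b)" by (simp add: algebra_simps)
    moreover have "(1 - u) / u > 0" using u \<open>u \<noteq> 0\<close> \<open>u \<noteq> 1\<close> by simp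
    ultimately show ?thesis by blast
  qed
  obtain l m where l: "l > 0" "a = z + l *\<^sub>R (z - b)" and m: "m > 0" "c = z + m *\<^sub>R (z - b)"
    using on_ray[OF assms(2,4)] on_ray[OF assms(3,5)] by blast
  have "x \<in> closed_segment z y"
    if "0 < p" "p \<le> q" "x = z + p *\<^sub>R (z - b)" "y = z + q *\<^sub>R (z - b)" for p q x y
  proof -
    have "(p / q) *\<^sub>R (y - z) = p *\<^sub>R (z - b)" using that by simp
    then have "x = z + (p / q) *\<^sub>R (y - z)" using that(3) by simp
    also have "\<dots> = (1 - p / q) *\<^sub>R z + (p / q) *\<^sub>R y" by (simp add: algebra_simps)
    finally have "x = (1 - p / q) *\<^sub>R z + (p / q) *\<^sub>R y" .
    then show ?thesis using that unfolding in_segment by (intro conjI exI[of _ "p / q"]) auto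
  qed
  then show ?thesis using l m by (cases "l \<le> m") auto
qed

lemma min_figure8_drop_front:
  assumes G: "min_figure8 Q z A B"
    and IH: "\<And>z' A' B'. length A' < length A \<Longrightarrow> min_figure8 Q z' A' B' \<Longrightarrow>
      collinear (insert z' (set A'))"
    and len: "length A \<ge> 2" and dup: "hd A = z \<or> hd A = hd (tl A)"
  shows "collinear (insert z (set A))"
proof -
  obtain a A1 where A: "A = a # A1" using min_figure8_nonempty[OF G] by (cases A) auto
  have nd: "\<exists>x\<in>set A. x \<noteq> z" "\<exists>x\<in>set B. x \<noteq> z" using G by (auto simp: min_figure8_def)
  show ?thesis
  proof (cases "a = z")
    case True
    have "min_figure8 Q z A1 B"
      by (rule min_figure8_drop_adjacent[OF G, where xs = "[]" and a = z and ys = "A1 @ z # B"])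
        (use nd A True in auto)
    with IH[OF _ this] A True show ?thesis by simp
  next
    case False
    with dup len A obtain A2 where A2: "A1 = a # A2" by (cases A1) auto
    have "min_figure8 Q z (a # A2) B"
      by (rule min_figure8_drop_adjacent[OF G, where xs = "[z]" and a = a and ys = "A2 @ z # B"])
        (use nd A A2 in auto)
    with IH[OF _ this] A A2 show ?thesis by simp
  qed
qed

text \<open>If the first vertex a of A lies between z and the last vertex of A, then re-rooting the
  figure-eight at a, with the loop z, B, z, leaves its length unchanged and shortens A.\<close>

lemma min_figure8_peel:
  assumes G: "min_figure8 Q z A B"
    and IH: "\<And>z' A' B'. length A' < length A \<Longrightarrow> min_figure8 Q z' A' B' \<Longrightarrow>
      collinear (insert z' (set A'))"
    and len: "length A \<ge> 2" and "hd (tl A) \<noteq> hd A" "hd A \<noteq> z"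
    and hd_between: "hd A \<in> closed_segment z (last A)"
  shows "collinear (insert z (set A))"
proof -
  obtain a A1 where A: "A = a # A1" and A1: "A1 \<noteq> []" using len by (cases A) (auto simp: Suc_le_eq)
  have B: "B \<noteq> []" using min_figure8_nonempty[OF G] by simp
  have "dist z (last A1) = dist z a + dist a (last A1)"
    using hd_between A A1 by (simp add: between_mem_segment[symmetric] between)
  then have "polygon_length (a # A1 @ a # z # B @ [z]) = polygon_length (z # A @ z # B)"
    using A A1 B polygon_length_figure8[of A1 "z # B @ [z]" a] polygon_length_figure8[of A B z]
    by (simp add: polyline_length_Cons polyline_length_snoc dist_commute)
  then have G': "min_figure8 Q a A1 (z # B @ [z])"
    by (rule min_figure8_cong[OF G, rotated 3]) (use assms A A1 in \<open>auto simp: neq_Nil_conv\<close>)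
  have "collinear (insert a (set A1))" using IH[OF _ G'] A by simp
  moreover have "collinear {a, hd A1, z}"
    using closed_segment_collinear[OF min_figure8_junctions(1)[OF G']] by (simp add: insert_commute)
  ultimately have "collinear (insert z (insert a (set A1)))"
    using collinear_insert_if_collinear_triple[of "insert a (set A1)" a "hd A1" z] assms A A1
    by auto
  then show ?thesis using A by simp
qed

lemma min_figure8_leaving_loop:
  assumes "min_figure8 Q z A B"
  obtains B' where "min_figure8 Q z A B'" "hd B' \<noteq> z \<or> last B' \<noteq> z"
  using assms
proof (induction "length B" arbitrary: B rule: less_induct)
  case (less B)
  show ?case
  proof (cases "hd B = z \<and> last B = z")
    case True
    then obtain B1 where B: "B = z # B1" using min_figure8_nonempty[OF less.prems(2)]
      by (cases B) auto
    have "min_figure8 Q z A B1"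
      by (rule min_figure8_drop_adjacent[OF less.prems(2),
            where xs = "z # A" and a = z and ys = B1])
        (use less.prems(2) B in \<open>auto simp: min_figure8_def\<close>)
    then show ?thesis using less.hyps[of B1] less.prems(1) B by simp
  qed (use less.prems in blast)
qed

lemma min_figure8_end_on_ray:
  assumes G: "min_figure8 Q z A B" and "hd B \<noteq> z \<or> last B \<noteq> z" "hd A \<noteq> z" "last A \<noteq> z"
  shows "hd A \<in> closed_segment z (last A) \<or> last A \<in> closed_segment z (hd A)"
proof (cases "last B = z")
  case False
  show ?thesis
    by (rule segment_ray_cases[OF False]) (use assms min_figure8_junctions(1,2)[OF G] in auto)
next
  case True
  show ?thesis
    by (rule segment_ray_cases[of "hd B"])
      (use assms True min_figure8_junctions(3,4)[OF G] in \<open>auto simp: closed_segment_commute\<close>)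
qed

lemma min_figure8_reduce_front:
  assumes G: "min_figure8 Q z A B"
    and IH: "\<And>z' A' B'. length A' < length A \<Longrightarrow> min_figure8 Q z' A' B' \<Longrightarrow>
      collinear (insert z' (set A'))"
    and len: "length A \<ge> 2"
    and front: "hd A = z \<or> hd A = hd (tl A) \<or> hd A \<in> closed_segment z (last A)"
  shows "collinear (insert z (set A))"
proof (cases "hd A = z \<or> hd A = hd (tl A)")
  case True
  show ?thesis by (rule min_figure8_drop_front[OF G IH len True])
next
  case False
  show ?thesis by (rule min_figure8_peel[OF G IH len]) (use False front in auto)
qed

lemma min_figure8_loop_collinear: "min_figure8 Q z A B \<Longrightarrow> collinear (insert z (set A))"
proof (induction "length A" arbitrary: z A B rule: less_induct)
  case less
  obtain B' where G: "min_figure8 Q z A B'" and leave: "hd B' \<noteq> z \<or> last B' \<noteq> z"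
    using min_figure8_leaving_loop[OF less.prems] .
  have "length A \<noteq> 0" using min_figure8_nonempty[OF G] by simp
  then consider "length A = 1" | "length A \<ge> 2" by linarith
  then show ?case
  proof cases
    case 1
    then show ?thesis by (cases A) auto
  next
    case len: 2
    consider "hd A = z \<or> hd A = hd (tl A) \<or> hd A \<in> closed_segment z (last A)"
      | "hd (rev A) = z \<or> hd (rev A) = hd (tl (rev A)) \<or>
          hd (rev A) \<in> closed_segment z (last (rev A))"
      using min_figure8_end_on_ray[OF G leave] len by (force simp: hd_rev last_rev)
    then show ?thesis
    proof cases
      case 1
      show ?thesis by (rule min_figure8_reduce_front[OF G less.hyps len 1])
    next
      case 2
      have "collinear (insert z (set (rev A)))"
        by (rule min_figure8_reduce_front[OF min_figure8_rev[OF G] _ _ 2])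
          (use less.hyps len in auto)
      then show ?thesis by simp
    qed
  qed
qed

lemma min_figure8_collinear: "min_figure8 Q z A B \<Longrightarrow> collinear (set (z # A @ z # B))"
proof (induction "length A + length B" arbitrary: A B rule: less_induct)
  case less
  note G = less.prems
  have ne: "A \<noteq> []" "B \<noteq> []" and nd: "\<exists>x\<in>set A. x \<noteq> z" "\<exists>x\<in>set B. x \<noteq> z"
    using G by (auto simp: min_figure8_def)
  consider A1 where "A = z # A1" | B1 where "B = z # B1" | "hd A \<noteq> z" "hd B \<noteq> z"
    using ne by (metis list.collapse)
  then show ?case
  proof cases
    case (1 A1)
    have "min_figure8 Q z A1 B"
      by (rule min_figure8_drop_adjacent[OF G, where xs = "[]" and a = z and ys = "A1 @ z # B"])
        (use nd 1 in auto)
    with less.hyps[OF _ this] 1 show ?thesis by simp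
  next
    case (2 B1)
    have "min_figure8 Q z A B1"
      by (rule min_figure8_drop_adjacent[OF G, where xs = "z # A" and a = z and ys = B1])
        (use nd 2 in auto)
    with less.hyps[OF _ this] 2 show ?thesis by simp
  next
    case 3
    have "collinear (insert (hd B) (insert z (set A)))"
      by (rule collinear_insert_if_collinear_triple[OF min_figure8_loop_collinear[OF G],
            of z "hd A"])
        (use ne 3 closed_segment_collinear[OF min_figure8_junctions(3)[OF G]]
          in \<open>auto simp: insert_commute\<close>)
    then have "collinear (insert (hd B) (insert z (set A)) \<union> insert z (set B))"
      by (rule collinear_Un_share_two[OF _ min_figure8_loop_collinear[OF min_figure8_swap[OF G]],
            of _ z "hd B"])
        (use ne 3 in auto)
    moreover have "insert (hd B) (insert z (set A)) \<union> insert z (set B) = set (z # A @ z # B)"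
      using ne by auto
    ultimately show ?thesis by simp
  qed
qed

section \<open>Inscribed polygons and images of polygonal paths\<close>

definition inscribed_length_le :: "(real \<Rightarrow> 'a::metric_space) \<Rightarrow> real \<Rightarrow> bool" where
  "inscribed_length_le g c \<longleftrightarrow>
     (\<forall>ts. sorted ts \<longrightarrow> set ts \<subseteq> {0..1} \<longrightarrow> polyline_length (map g ts) \<le> c)"

lemma dist_linepath: "dist (linepath a b s) (linepath a b t) = \<bar>t - s\<bar> * dist a b"
proof -
  have "linepath a b s - linepath a b t = (s - t) *\<^sub>R (b - a)"
    by (simp add: linepath_def algebra_simps)
  then show ?thesis by (simp add: dist_norm norm_minus_commute abs_minus_commute)
qed

lemma polyline_length_linepath:
  "sorted (t # ts) \<Longrightarrow>
   polyline_length (map (linepath a b) (t # ts)) \<le> (last (t # ts) - t) * dist a b"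
proof (induction ts arbitrary: t)
  case (Cons t' ts)
  then have "polyline_length (map (linepath a b) (t' # ts)) \<le> (last (t' # ts) - t') * dist a b"
    "t \<le> t'"
    by simp_all
  then show ?case by (simp add: dist_linepath algebra_simps)
qed simp

lemma inscribed_length_le_linepath: "inscribed_length_le (linepath a b) (dist a b)"
  unfolding inscribed_length_le_def
proof (intro allI impI)
  fix ts :: "real list" assume ts: "sorted ts" "set ts \<subseteq> {0..1}"
  show "polyline_length (map (linepath a b) ts) \<le> dist a b"
  proof (cases ts)
    case (Cons t ts')
    have "last ts \<in> {0..1}" "t \<in> {0..1}" using ts Cons last_in_set[of ts] by auto
    then have "(last ts - t) * dist a b \<le> 1 * dist a b" by (intro mult_right_mono) auto
    then show ?thesis using polyline_length_linepath[of t ts' a b] ts Cons by simp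
  qed simp
qed

lemma sorted_split_filter_le:
  "sorted ts \<Longrightarrow> ts = filter (\<lambda>t. t \<le> (c::real)) ts @ filter (\<lambda>t. \<not> t \<le> c) ts"
proof (induction ts)
  case (Cons t ts)
  show ?case
  proof (cases "t \<le> c")
    case False
    then have "\<forall>u\<in>set ts. \<not> u \<le> c" using Cons.prems by auto
    then show ?thesis using False by (simp add: filter_empty_conv)
  qed (use Cons in simp)
qed simp

lemma inscribed_length_le_join:
  assumes "inscribed_length_le g1 c1" "inscribed_length_le g2 c2" "pathfinish g1 = pathstart g2"
  shows "inscribed_length_le (g1 +++ g2) (c1 + c2)"
  unfolding inscribed_length_le_def
proof (intro allI impI)
  fix ts :: "real list" assume ts: "sorted ts" "set ts \<subseteq> {0..1}"
  define ts1 where "ts1 = filter (\<lambda>t. t \<le> 1/2) ts"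
  define ts2 where "ts2 = filter (\<lambda>t. \<not> t \<le> 1/2) ts"
  let ?g = "g1 +++ g2"
  have mid: "?g (1/2) = g1 1" "g1 1 = g2 0"
    using assms(3) by (simp_all add: joinpaths_def pathfinish_def pathstart_def)
  have m1: "map ?g ts1 @ [?g (1/2)] = map g1 (map (\<lambda>t. 2 * t) ts1 @ [1])"
    using mid unfolding ts1_def by (simp add: joinpaths_def)
  have m2: "?g (1/2) # map ?g ts2 = map g2 (0 # map (\<lambda>t. 2 * t - 1) ts2)"
    using mid unfolding ts2_def by (simp add: joinpaths_def)
  have s1: "sorted (map (\<lambda>t. 2 * t) ts1 @ [1])" "set (map (\<lambda>t. 2 * t) ts1 @ [1]) \<subseteq> {0..1}"
    using ts unfolding ts1_def
    by (auto simp: sorted_append sorted_map intro: sorted_wrt_filter)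
  have s2: "sorted (0 # map (\<lambda>t. 2 * t - 1) ts2)" "set (0 # map (\<lambda>t. 2 * t - 1) ts2) \<subseteq> {0..1}"
    using ts unfolding ts2_def
    by (auto simp: sorted_map intro: sorted_wrt_filter)
  have "polyline_length (map ?g ts) \<le> polyline_length (map ?g ts1 @ ?g (1/2) # map ?g ts2)"
    using sorted_split_filter_le[OF ts(1), of "1/2"] polyline_length_insert_ge
    unfolding ts1_def ts2_def by (metis map_append)
  also have "\<dots> = polyline_length (map ?g ts1 @ [?g (1/2)]) +
      polyline_length (?g (1/2) # map ?g ts2)"
    by (rule polyline_length_split)
  also have "\<dots> \<le> c1 + c2"
    using assms(1,2) s1 s2 unfolding m1 m2 inscribed_length_le_def by (intro add_mono) blast+
  finally show "polyline_length (map ?g ts) \<le> c1 + c2" .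
qed

lemma pathstart_polypath: "ps \<noteq> [] \<Longrightarrow> pathstart (polypath ps) = hd ps"
  by (induction ps rule: polypath.induct) (auto simp: pathstart_def linepath_def joinpaths_def)

lemma pathfinish_polypath: "ps \<noteq> [] \<Longrightarrow> pathfinish (polypath ps) = last ps"
  by (induction ps rule: polypath.induct) (auto simp: pathfinish_def linepath_def joinpaths_def)

lemma path_polypath: "path (polypath ps)"
proof (induction ps rule: polypath.induct)
  case 1 show ?case by (simp only: polypath.simps path_linepath)
next
  case (2 a) show ?case by (simp only: polypath.simps path_linepath)
qed (auto simp: pathstart_polypath)

lemma inscribed_length_le_polypath: "inscribed_length_le (polypath ps) (polyline_length ps)"
proof (induction ps rule: polypath.induct)
  case 1
  show ?case using inscribed_length_le_linepath[of "0::real^2" 0]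
    by (simp only: polypath.simps polyline_length.simps dist_self)
next
  case (2 a)
  show ?case using inscribed_length_le_linepath[of a a]
    by (simp only: polypath.simps polyline_length.simps dist_self)
next
  case (3 a b)
  show ?case using inscribed_length_le_linepath[of a b] by simp
next
  case (4 a b c xs)
  then show ?case
    using inscribed_length_le_join[OF inscribed_length_le_linepath[of a b] 4]
    by (simp add: pathstart_polypath)
qed

lemma path_image_polypath:
  "length ps \<ge> 2 \<Longrightarrow>
   path_image (polypath ps) = (\<Union>i<length ps - 1. closed_segment (ps ! i) (ps ! Suc i))"
proof (induction ps rule: polypath.induct)
  case (3 a b) then show ?case by (simp add: lessThan_Suc)
next
  case (4 a b c xs)
  have "path_image (polypath (a # b # c # xs)) =
      closed_segment a b \<union> path_image (polypath (b # c # xs))"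
    by (simp add: path_image_join pathstart_polypath)
  also have "\<dots> = (\<Union>i<length (a # b # c # xs) - 1.
      closed_segment ((a # b # c # xs) ! i) ((a # b # c # xs) ! Suc i))"
    using 4 by (simp add: lessThan_Suc_eq_insert_0)
  finally show ?case .
qed auto

lemma path_image_closed_polypath:
  "qs \<noteq> [] \<Longrightarrow> path_image (closed_polypath qs) =
     (\<Union>i<length qs. closed_segment ((qs @ [hd qs]) ! i) ((qs @ [hd qs]) ! Suc i))"
  unfolding closed_polypath_def by (subst path_image_polypath) (auto simp: Suc_le_eq)

lemma closed_segment_subset_closed_polypath:
  assumes "qs = U @ V" "U \<noteq> []" "V \<noteq> []"
  shows "closed_segment (last U) (hd V) \<subseteq> path_image (closed_polypath qs)"
proof -
  define k where "k = length U - 1"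
  have "(qs @ [hd qs]) ! k = last U" "(qs @ [hd qs]) ! Suc k = hd V"
    using assms unfolding k_def by (auto simp: nth_append last_conv_nth hd_conv_nth)
  moreover have "k < length qs" using assms unfolding k_def by (cases U) auto
  ultimately show ?thesis
    using path_image_closed_polypath[of qs] assms by (auto intro!: bexI[of _ k])
qed

lemma closing_segment_subset_closed_polypath:
  assumes "qs \<noteq> []"
  shows "closed_segment (last qs) (hd qs) \<subseteq> path_image (closed_polypath qs)"
proof -
  define k where "k = length qs - 1"
  have "(qs @ [hd qs]) ! k = last qs" "(qs @ [hd qs]) ! Suc k = hd qs" "k < length qs"
    using assms unfolding k_def by (auto simp: nth_append last_conv_nth)
  then show ?thesis using path_image_closed_polypath[of qs] assms by (auto intro!: bexI[of _ k])
qed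

lemma vertex_in_path_image_closed_polypath:
  assumes "x \<in> set qs"
  shows "x \<in> path_image (closed_polypath qs)"
proof -
  obtain k where k: "k < length qs" "qs ! k = x" using assms by (auto simp: in_set_conv_nth)
  then have "x \<in> closed_segment ((qs @ [hd qs]) ! k) ((qs @ [hd qs]) ! Suc k)"
    by (simp add: nth_append)
  then show ?thesis using k assms by (subst path_image_closed_polypath) auto
qed

lemma polyline_length_conv_sum:
  "polyline_length (map g ts) = (\<Sum>i < length ts - 1. dist (g (ts ! i)) (g (ts ! Suc i)))"
proof (induction ts rule: induct_list012)
  case (3 a b ts)
  have "(\<Sum>i < length (a # b # ts) - 1. dist (g ((a # b # ts) ! i)) (g ((a # b # ts) ! Suc i)))
      = dist (g a) (g b) +
        (\<Sum>i < length (b # ts) - 1. dist (g ((b # ts) ! i)) (g ((b # ts) ! Suc i)))"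
    by (simp add: sum.lessThan_Suc_shift del: sum.lessThan_Suc)
  then show ?case using 3 by simp
qed simp_all

lemma sorted_hd_le_last:
  fixes ts :: "'a::linorder list"
  shows "sorted ts \<Longrightarrow> x \<in> set ts \<Longrightarrow> hd ts \<le> x \<and> x \<le> last ts"
proof -
  assume "sorted ts" "x \<in> set ts"
  then obtain i where "i < length ts" "x = ts ! i" "ts \<noteq> []"
    by (metis in_set_conv_nth empty_iff list.set(1))
  with \<open>sorted ts\<close> show ?thesis
    by (auto simp: hd_conv_nth last_conv_nth sorted_iff_nth_mono)
qed

lemma curve_length_polypath_le: "curve_length (polypath ps) \<le> ereal (polyline_length ps)"
  unfolding curve_length_def
proof (rule SUP_least)
  fix ts :: "real list" assume "ts \<in> {ts. sorted ts \<and> ts \<noteq> [] \<and> hd ts = 0 \<and> last ts = 1}"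
  then have "sorted ts" "set ts \<subseteq> {0..1}" using sorted_hd_le_last[of ts] by auto
  then have "polyline_length (map (polypath ps) ts) \<le> polyline_length ps"
    using inscribed_length_le_polypath[of ps] unfolding inscribed_length_le_def by blast
  then show "ereal (\<Sum>i < length ts - 1. dist (polypath ps (ts ! i)) (polypath ps (ts ! Suc i)))
      \<le> ereal (polyline_length ps)"
    by (simp add: polyline_length_conv_sum)
qed

lemma polygon_length_le_curve_length:
  assumes "pathfinish g = pathstart g" "sorted ts" "ts \<noteq> []" "set ts \<subseteq> {0..1}"
  shows "ereal (polygon_length (map g ts)) \<le> curve_length g"
proof -
  define ls where "ls = 0 # ts @ [1]"
  have ls: "ls \<in> {ts. sorted ts \<and> ts \<noteq> [] \<and> hd ts = 0 \<and> last ts = 1}"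
    using assms unfolding ls_def by (auto simp: sorted_append)
  have "g 0 = g 1" using assms(1) by (simp add: pathfinish_def pathstart_def)
  then have "dist (g (last ts)) (g (hd ts)) \<le> dist (g (last ts)) (g 1) + dist (g 0) (g (hd ts))"
    using dist_triangle[of "g (last ts)" "g (hd ts)" "g 1"] by (simp add: dist_commute)
  then have "polygon_length (map g ts) \<le> polyline_length (map g ls)"
    unfolding ls_def using assms(3)
    by (simp add: polygon_length_conv polyline_length_append polyline_length_Cons hd_map last_map)
  also have "ereal (polyline_length (map g ls)) \<le> curve_length g"
    unfolding curve_length_def polyline_length_conv_sum by (rule SUP_upper[OF ls])
  finally show ?thesis by simp
qed

section \<open>Parametrization of polygonal paths\<close>

text \<open>polypath (a # b # ...) runs along the first edge during [0, 1/2] and along the rest,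
  rescaled, during [1/2, 1]; so vertex i of a path through m vertices is reached at time
  vertex_time m i.\<close>

fun vertex_time :: "nat \<Rightarrow> nat \<Rightarrow> real" where
  "vertex_time m 0 = 0"
| "vertex_time m (Suc i) = (if m \<le> 2 then 1 else (1 + vertex_time (m - 1) i) / 2)"

lemma vertex_time_bounds: "0 \<le> vertex_time m i \<and> vertex_time m i \<le> 1"
  by (induction m i rule: vertex_time.induct) auto

lemma vertex_time_pos: "vertex_time m (Suc i) > 0"
  using vertex_time_bounds[of "m - 1" i] by auto

lemma vertex_time_eq_0_iff: "vertex_time m i = 0 \<longleftrightarrow> i = 0"
  using vertex_time_pos[of m "i - 1"] by (cases i) auto

lemma vertex_time_step: "m \<ge> 2 \<Longrightarrow> Suc i < m \<Longrightarrow> vertex_time m i < vertex_time m (Suc i)"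
proof (induction i arbitrary: m)
  case 0 then show ?case using vertex_time_pos[of m 0] by simp
next
  case (Suc i)
  then show ?case using Suc.IH[of "m - 1"] by simp
qed

lemma vertex_time_last: "m \<ge> 2 \<Longrightarrow> vertex_time m (m - 1) = 1"
proof (induction m rule: less_induct)
  case (less m)
  show ?case
  proof (cases "m = 2")
    case False
    then have "vertex_time (m - 1) (m - 2) = 1" using less.IH[of "m - 1"] less.prems
      by (simp add: numeral_2_eq_2)
    moreover have "m - 1 = Suc (m - 2)" using False less.prems by arith
    ultimately show ?thesis using False less.prems by simp
  qed (simp add: numeral_2_eq_2)
qed

lemma vertex_time_mono_strict: "m \<ge> 2 \<Longrightarrow> i < j \<Longrightarrow> j < m \<Longrightarrow> vertex_time m i < vertex_time m j"
proof (induction j)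
  case (Suc j)
  then show ?case using vertex_time_step[of m j] by (cases "i = j") auto
qed simp

lemma vertex_time_mono: "m \<ge> 2 \<Longrightarrow> i \<le> j \<Longrightarrow> j < m \<Longrightarrow> vertex_time m i \<le> vertex_time m j"
  using vertex_time_mono_strict[of m i j] by (cases "i = j") auto

lemma polypath_vertex_time:
  "length ps \<ge> 2 \<Longrightarrow> i < length ps \<Longrightarrow> polypath ps (vertex_time (length ps) i) = ps ! i"
proof (induction ps arbitrary: i rule: polypath.induct)
  case (3 a b)
  then show ?case by (cases i) (auto simp: linepath_def)
next
  case (4 a b c xs)
  show ?case
  proof (cases i)
    case (Suc j)
    have "vertex_time (length (b # c # xs)) j = 0 \<or> vertex_time (length (b # c # xs)) j > 0"
      using vertex_time_bounds by (auto simp: order_le_less)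
    then show ?thesis
      using 4 Suc vertex_time_eq_0_iff by (auto simp: joinpaths_def linepath_def field_simps)
  qed (simp add: joinpaths_def linepath_def)
qed auto

lemma polypath_edge:
  assumes "length ps \<ge> 2" "Suc i < length ps"
    and "vertex_time (length ps) i \<le> t" "t \<le> vertex_time (length ps) (Suc i)"
  shows "polypath ps t = linepath (ps ! i) (ps ! Suc i) ((t - vertex_time (length ps) i) /
    (vertex_time (length ps) (Suc i) - vertex_time (length ps) i))"
  using assms
proof (induction ps arbitrary: i t rule: polypath.induct)
  case (4 a b c xs)
  let ?m = "length (a # b # c # xs)" and ?m' = "length (b # c # xs)"
  show ?case
  proof (cases i)
    case 0
    then show ?thesis using 4 by (simp add: joinpaths_def mult.commute)
  next
    case (Suc j)
    have vi: "vertex_time ?m i = (1 + vertex_time ?m' j) / 2"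
      "vertex_time ?m (Suc i) = (1 + vertex_time ?m' (Suc j)) / 2"
      using Suc by simp_all
    show ?thesis
    proof (cases "t \<le> 1/2")
      case True
      then have "vertex_time ?m' j = 0" using 4(4) vi vertex_time_bounds[of ?m' j] by auto
      then have t: "j = 0" "t = 1/2" "vertex_time ?m i = 1/2"
        using 4(4) True vi vertex_time_eq_0_iff[of ?m' j] by auto
      have "polypath (a # b # c # xs) (1/2) = b" by (simp add: joinpaths_def linepath_def)
      then have "polypath (a # b # c # xs) t = b" using t(2) by (simp only:)
      moreover have "(a # b # c # xs) ! i = b" using Suc t(1) by simp
      moreover have "(t - vertex_time ?m i) / (vertex_time ?m (Suc i) - vertex_time ?m i) = 0"
        using t(2,3) by simp
      ultimately show ?thesis by (simp only: linepath_0')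
    next
      case False
      have "vertex_time ?m' j < vertex_time ?m' (Suc j)"
        using vertex_time_step[of ?m' j] 4(3) Suc by simp
      then have "(2 * t - 1 - vertex_time ?m' j) / (vertex_time ?m' (Suc j) - vertex_time ?m' j)
          = (t - vertex_time ?m i) / (vertex_time ?m (Suc i) - vertex_time ?m i)"
        using vi by (simp add: field_simps)
      moreover have "polypath (b # c # xs) (2 * t - 1) = linepath ((b # c # xs) ! j)
          ((b # c # xs) ! Suc j)
          ((2 * t - 1 - vertex_time ?m' j) / (vertex_time ?m' (Suc j) - vertex_time ?m' j))"
        by (rule 4(1)) (use 4(3-5) vi Suc in auto)
      ultimately show ?thesis using False Suc by (simp add: joinpaths_def)
    qed
  qed
qed auto

lemma polypath_edge_inj:
  assumes "length ps \<ge> 2" "Suc i < length ps" "ps ! i \<noteq> ps ! Suc i"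
    and "s \<in> {vertex_time (length ps) i .. vertex_time (length ps) (Suc i)}"
    and "t \<in> {vertex_time (length ps) i .. vertex_time (length ps) (Suc i)}"
    and "polypath ps s = polypath ps t"
  shows "s = t"
proof -
  let ?a = "vertex_time (length ps) i" and ?b = "vertex_time (length ps) (Suc i)"
  have lt: "?a < ?b" using vertex_time_step assms(1,2) by simp
  have "(s - ?a) / (?b - ?a) \<in> {0..1}" "(t - ?a) / (?b - ?a) \<in> {0..1}"
    using assms(4,5) lt by (auto simp: divide_simps)
  moreover have "linepath (ps ! i) (ps ! Suc i) ((s - ?a) / (?b - ?a)) =
      linepath (ps ! i) (ps ! Suc i) ((t - ?a) / (?b - ?a))"
    using assms polypath_edge[of ps i s] polypath_edge[of ps i t] by auto
  ultimately have "(s - ?a) / (?b - ?a) = (t - ?a) / (?b - ?a)"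
    using inj_on_linepath[OF assms(3)] by (auto dest: inj_onD)
  then show ?thesis using lt by (simp add: divide_simps)
qed

lemma vertex_time_cover:
  assumes "m \<ge> 2" "0 \<le> t" "t < 1"
  shows "\<exists>i. Suc i < m \<and> vertex_time m i \<le> t \<and> t < vertex_time m (Suc i)"
proof -
  have "\<exists>i<k. vertex_time m i \<le> t \<and> t < vertex_time m (Suc i)" if "t < vertex_time m k" for k
    using that
  proof (induction k)
    case (Suc k)
    then show ?case by (cases "vertex_time m k \<le> t") (auto intro: less_SucI)
  qed (use assms in simp)
  moreover have "t < vertex_time m (m - 1)" using assms vertex_time_last[of m] by auto
  ultimately obtain i where "i < m - 1" "vertex_time m i \<le> t" "t < vertex_time m (Suc i)"
    by blast
  then show ?thesis by (intro exI[of _ i]) auto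
qed

section \<open>Non-simple closed polygons contain figure-eights\<close>

lemma self_intersection_if_not_simple_closed_path:
  assumes "path g" "pathfinish g = pathstart g" "\<not> simple_path g"
  obtains x y where "0 \<le> x" "x < y" "y < 1" "g x = g y"
proof -
  obtain a b where ab: "a \<in> {0..1}" "b \<in> {0..1}" "g a = g b" "a < b" "\<not> (a = 0 \<and> b = 1)"
    using assms(1,3) unfolding simple_path_def loop_free_def
    by (metis (no_types, lifting) linorder_neqE_linordered_idom)
  show ?thesis
  proof (cases "b = 1")
    case True
    have "g 0 = g a" using assms(2) ab True by (simp add: pathfinish_def pathstart_def)
    then show ?thesis using that[of 0 a] ab True by auto
  qed (use that ab in auto)
qed

lemma polypath_edge_vertex_ne:
  assumes "length ps \<ge> 2" "Suc j < length ps" "ps ! j \<noteq> ps ! Suc j"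
    and "vertex_time (length ps) j \<le> t" "t < vertex_time (length ps) (Suc j)"
  shows "polypath ps t \<noteq> ps ! Suc j"
proof
  assume "polypath ps t = ps ! Suc j"
  then have "polypath ps t = polypath ps (vertex_time (length ps) (Suc j))"
    using polypath_vertex_time[OF assms(1,2)] by metis
  then have "t = vertex_time (length ps) (Suc j)"
    using polypath_edge_inj[OF assms(1-3)] assms(4,5) by auto
  then show False using assms(5) by simp
qed

text \<open>A samples the loop of g between the parameters x and y of the double point, B the
  complementary loop through g 0 = g 1.\<close>

lemma figure8_of_double_point:
  fixes g :: "real \<Rightarrow> 'a::metric_space"
  assumes "inscribed_length_le g c" "g 0 = g 1"
    and "sorted ts" "set ts \<subseteq> {0..1}" "ts \<noteq> []" "hd ts = 0"
    and "0 \<le> x" "x < y" "y < 1" "g x = g y"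
  defines "A \<equiv> map g (filter (\<lambda>t. x < t \<and> t < y) ts)"
    and "B \<equiv> map g (filter (\<lambda>t. y < t) ts) @ map g (filter (\<lambda>t. t < x) ts)"
  shows "set (map g ts) \<subseteq> set (g x # A @ g x # B)" "polygon_length (g x # A @ g x # B) \<le> c"
proof -
  define F0 where "F0 = filter (\<lambda>t. t < x) ts"
  define FA where "FA = filter (\<lambda>t. x < t \<and> t < y) ts"
  define F1 where "F1 = filter (\<lambda>t. y < t) ts"
  show "set (map g ts) \<subseteq> set (g x # A @ g x # B)"
  proof
    fix q assume "q \<in> set (map g ts)"
    then obtain t where t: "t \<in> set ts" "q = g t" by auto
    consider "t < x" | "t = x" | "x < t \<and> t < y" | "t = y" | "y < t" by linarith
    then show "q \<in> set (g x # A @ g x # B)"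
      by cases (use t assms(10) in \<open>auto simp: A_def B_def\<close>)
  qed
  define S where "S = F0 @ [x] @ FA @ [y] @ F1 @ [1]"
  define L where "L = map g F0 @ g x # A @ g x # map g F1"
  have "sorted S" "set S \<subseteq> {0..1}"
    unfolding S_def F0_def FA_def F1_def
    using assms(3,4,7-9) by (auto simp: sorted_append intro: sorted_wrt_filter)
  then have "polyline_length (map g S) \<le> c"
    using assms(1) unfolding inscribed_length_le_def by blast
  moreover have "hd L = g 0"
  proof (cases "F0 = []")
    case True
    then have "x = 0" using assms(5-7) unfolding F0_def by (cases ts) (auto split: if_splits)
    then show ?thesis using True unfolding L_def by simp
  next
    case False
    then have "0 < x" using assms(4) unfolding F0_def by (force simp: filter_empty_conv)
    then have "hd F0 = 0" using assms(5,6) unfolding F0_def by (cases ts) auto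
    then show ?thesis using False unfolding L_def by (simp add: hd_map)
  qed
  then have "map g S = L @ [hd L]"
    unfolding S_def L_def A_def FA_def using assms(2,10) by simp
  then have "polyline_length (map g S) = polygon_length L" unfolding polygon_length_def by simp
  also have "\<dots> = polygon_length (g x # A @ g x # B)"
    using polygon_length_rotate[of "map g F0" "g x # A @ g x # map g F1"]
    unfolding L_def B_def F0_def F1_def by simp
  finally show "polygon_length (g x # A @ g x # B) \<le> c" using \<open>polyline_length (map g S) \<le> c\<close>
    by simp
qed

lemma closed_polypath_vertex_time:
  assumes "length qs \<ge> 2" "i \<le> length qs"
  shows "closed_polypath qs (vertex_time (Suc (length qs)) i) = (qs @ [hd qs]) ! i"
  using polypath_vertex_time[of "qs @ [hd qs]" i] assms unfolding closed_polypath_def by simp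

lemma closed_polypath_edge_nondegenerate:
  assumes "distinct qs" "length qs \<ge> 2" "i < length qs"
  shows "(qs @ [hd qs]) ! i \<noteq> (qs @ [hd qs]) ! Suc i"
proof (cases "Suc i < length qs")
  case True
  then show ?thesis using assms by (simp add: nth_append nth_eq_iff_index_eq)
next
  case False
  then have i: "Suc i = length qs" "i \<noteq> 0" using assms(2,3) by auto
  have "0 < length qs" using assms(3) by linarith
  then have "qs ! i \<noteq> qs ! 0" using nth_eq_iff_index_eq[OF assms(1) assms(3)] i(2) by simp
  moreover have "qs \<noteq> []" using assms(2) by auto
  ultimately show ?thesis using i by (simp add: nth_append hd_conv_nth)
qed

lemma closed_polypath_vertex_inside_loop:
  assumes "length qs \<ge> 2" "distinct qs" "0 \<le> x" "x < y" "y < 1"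
    and "closed_polypath qs x = closed_polypath qs y"
  obtains i where "i < length qs" "x < vertex_time (Suc (length qs)) i"
    "vertex_time (Suc (length qs)) i < y" "qs ! i \<noteq> closed_polypath qs x"
proof -
  let ?ps = "qs @ [hd qs]"
  let ?\<tau> = "vertex_time (length ?ps)"
  have ps: "length ?ps \<ge> 2" using assms(1) by simp
  obtain j where j: "Suc j < length ?ps" "?\<tau> j \<le> x" "x < ?\<tau> (Suc j)"
    using vertex_time_cover[OF ps, of x] assms(3-5) by auto
  have nd: "?ps ! j \<noteq> ?ps ! Suc j"
    using closed_polypath_edge_nondegenerate[OF assms(2,1)] j(1) by simp
  have "?\<tau> (Suc j) < y"
  proof (rule ccontr)
    assume "\<not> ?\<tau> (Suc j) < y"
    then have "x = y" using polypath_edge_inj[OF ps j(1) nd, of x y] j assms(4,6)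
      unfolding closed_polypath_def by auto
    then show False using assms(4) by simp
  qed
  moreover have "Suc j < length qs"
  proof (rule ccontr)
    assume "\<not> Suc j < length qs"
    then have "Suc j = length ?ps - 1" using j(1) by simp
    then have "?\<tau> (Suc j) = 1" using vertex_time_last[OF ps] by metis
    then show False using \<open>?\<tau> (Suc j) < y\<close> assms(5) by simp
  qed
  moreover have "?ps ! Suc j \<noteq> closed_polypath qs x"
    using polypath_edge_vertex_ne[OF ps j(1) nd j(2,3)] unfolding closed_polypath_def by auto
  ultimately show ?thesis using that[of "Suc j"] j by (simp add: nth_append)
qed

lemma closed_polypath_vertex_outside_loop:
  assumes "length qs \<ge> 2" "distinct qs" "0 \<le> x" "x < y" "y < 1"
    and "closed_polypath qs x = closed_polypath qs y"
  obtains i where "i < length qs"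
    "vertex_time (Suc (length qs)) i < x \<or> y < vertex_time (Suc (length qs)) i"
    "qs ! i \<noteq> closed_polypath qs x"
proof -
  let ?ps = "qs @ [hd qs]"
  let ?\<tau> = "vertex_time (length ?ps)"
  have ps: "length ?ps \<ge> 2" using assms(1) by simp
  obtain j where j: "Suc j < length ?ps" "?\<tau> j \<le> y" "y < ?\<tau> (Suc j)"
    using vertex_time_cover[OF ps, of y] assms(3-5) by auto
  have nd: "?ps ! j \<noteq> ?ps ! Suc j"
    using closed_polypath_edge_nondegenerate[OF assms(2,1)] j(1) by simp
  have ne: "?ps ! Suc j \<noteq> closed_polypath qs x"
    using polypath_edge_vertex_ne[OF ps j(1) nd j(2,3)] assms(6)
    unfolding closed_polypath_def by auto
  show ?thesis
  proof (cases "Suc j < length qs")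
    case True
    then show ?thesis using that[of "Suc j"] j ne by (simp add: nth_append)
  next
    case False
    have "qs \<noteq> []" using assms(1) by auto
    then have "(qs @ [hd qs]) ! Suc j = qs ! 0" "(qs @ [hd qs]) ! 0 = qs ! 0"
      using False j(1) by (simp_all add: nth_append hd_conv_nth)
    then have "qs ! 0 \<noteq> closed_polypath qs x" "closed_polypath qs 0 = qs ! 0"
      using ne closed_polypath_vertex_time[OF assms(1), of 0] by simp_all
    then have "x \<noteq> 0" by auto
    then have "?\<tau> 0 < x" using assms(3) by simp
    then show ?thesis using that[of 0] \<open>qs \<noteq> []\<close> \<open>qs ! 0 \<noteq> closed_polypath qs x\<close> by simp
  qed
qed

lemma nonsimple_closed_polypath_figure8:
  assumes "length qs \<ge> 2" "distinct qs" "\<not> simple_path (closed_polypath qs)"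
  obtains z A B where "\<exists>x\<in>set A. x \<noteq> z" "\<exists>x\<in>set B. x \<noteq> z" "set qs \<subseteq> set (z # A @ z # B)"
    "polygon_length (z # A @ z # B) \<le> polygon_length qs"
proof -
  let ?g = "closed_polypath qs"
  let ?\<tau> = "vertex_time (Suc (length qs))"
  define ts where "ts = map ?\<tau> [0..<length qs]"
  have "qs \<noteq> []" using assms(1) by auto
  have g01: "?g 0 = ?g 1" and "path ?g"
    using \<open>qs \<noteq> []\<close> pathstart_polypath[of "qs @ [hd qs]"] pathfinish_polypath[of "qs @ [hd qs]"]
    by (simp_all add: closed_polypath_def pathstart_def pathfinish_def path_polypath)
  then obtain x y where xy: "0 \<le> x" "x < y" "y < 1" "?g x = ?g y"
    using self_intersection_if_not_simple_closed_path[of ?g] assms(3)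
    by (auto simp: pathstart_def pathfinish_def)
  have "sorted ts"
    unfolding ts_def sorted_iff_nth_mono using vertex_time_mono[of "Suc (length qs)"] assms(1)
    by auto
  moreover have "[0..<length qs] = 0 # [Suc 0..<length qs]"
    using \<open>qs \<noteq> []\<close> by (intro upt_conv_Cons) simp
  then have "set ts \<subseteq> {0..1}" "ts \<noteq> []" "hd ts = 0"
    unfolding ts_def using vertex_time_bounds by auto
  ultimately have ts: "sorted ts" "set ts \<subseteq> {0..1}" "ts \<noteq> []" "hd ts = 0" by blast+
  have qs: "map ?g ts = qs"
    by (rule nth_equalityI)
      (use assms(1) closed_polypath_vertex_time[OF assms(1)] in \<open>auto simp: ts_def nth_append\<close>)
  have len: "inscribed_length_le ?g (polygon_length qs)"
    unfolding closed_polypath_def polygon_length_def by (rule inscribed_length_le_polypath)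
  define A where "A = map ?g (filter (\<lambda>t. x < t \<and> t < y) ts)"
  define B where "B = map ?g (filter (\<lambda>t. y < t) ts) @ map ?g (filter (\<lambda>t. t < x) ts)"
  have vertex: "qs ! i = ?g (?\<tau> i)" "?\<tau> i \<in> set ts" if "i < length qs" for i
    using that closed_polypath_vertex_time[OF assms(1), of i] by (auto simp: ts_def nth_append)
  obtain i where i: "i < length qs" "x < ?\<tau> i" "?\<tau> i < y" "qs ! i \<noteq> ?g x"
    using closed_polypath_vertex_inside_loop[OF assms(1,2) xy] .
  then have "qs ! i \<in> set A" unfolding A_def using vertex[OF i(1)] by auto
  then have nd_A: "\<exists>w\<in>set A. w \<noteq> ?g x" using i(4) by blast
  obtain j where j: "j < length qs" "?\<tau> j < x \<or> y < ?\<tau> j" "qs ! j \<noteq> ?g x"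
    using closed_polypath_vertex_outside_loop[OF assms(1,2) xy] .
  then have "qs ! j \<in> set B" unfolding B_def using vertex[OF j(1)] by auto
  then have nd_B: "\<exists>w\<in>set B. w \<noteq> ?g x" using j(3) by blast
  have "set qs \<subseteq> set (?g x # A @ ?g x # B)"
    "polygon_length (?g x # A @ ?g x # B) \<le> polygon_length qs"
    using figure8_of_double_point[OF len g01 ts xy] unfolding A_def B_def qs by simp_all
  with nd_A nd_B show ?thesis by (rule that)
qed

lemma shortest_closed_polypath_simple:
  assumes "length qs \<ge> 2" "distinct qs" "\<not> collinear (set qs)"
    and "\<And>r. set qs \<subseteq> set r \<Longrightarrow> polygon_length qs \<le> polygon_length r"
  shows "simple_path (closed_polypath qs)"
proof (rule ccontr)
  assume "\<not> simple_path (closed_polypath qs)"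
  obtain z A B where W: "\<exists>x\<in>set A. x \<noteq> z" "\<exists>x\<in>set B. x \<noteq> z"
    "set qs \<subseteq> set (z # A @ z # B)" "polygon_length (z # A @ z # B) \<le> polygon_length qs"
    by (rule nonsimple_closed_polypath_figure8[OF assms(1,2) \<open>\<not> simple_path _\<close>])
  have "polygon_length (z # A @ z # B) \<le> polygon_length r" if "set qs \<subseteq> set r" for r
    using W(4) assms(4)[OF that] by linarith
  then have "min_figure8 (set qs) z A B" unfolding min_figure8_def using W(1-3) by blast
  then have "collinear (set (z # A @ z # B))" by (rule min_figure8_collinear)
  then show False using assms(3) W(3) collinear_subset by blast
qed

section \<open>Curves whose inscribed polygons are longest at given parameters\<close>

lemma closed_segment_subset_if_connected:
  fixes a b :: "'a::euclidean_space"
  assumes "connected C" "C \<subseteq> closed_segment a b" "a \<in> C" "b \<in> C"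
  shows "closed_segment a b \<subseteq> C"
proof -
  have "collinear C" using assms(2) collinear_closed_segment collinear_subset by blast
  then have "convex C" using assms(1) convex_connected_collinear by blast
  then show ?thesis using assms(3,4) by (simp add: closed_segment_subset)
qed

lemma sorted_insert_between:
  fixes U V :: "real list"
  assumes "sorted (U @ V)" "U \<noteq> []" "V \<noteq> []" "last U \<le> s" "s \<le> hd V"
  shows "sorted (U @ s # V)"
proof -
  have "sorted U" "sorted V" using assms(1) by (auto simp: sorted_append)
  then have "\<forall>u\<in>set U. u \<le> s" "\<forall>v\<in>set V. s \<le> v"
    using sorted_hd_le_last assms(4,5) by force+
  then show ?thesis using assms(1) by (auto simp: sorted_append)
qed

context
  fixes T :: "real \<Rightarrow> real^2" and ts :: "real list"
  assumes path: "path T" and closed: "pathfinish T = pathstart T"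
    and sorted: "sorted ts" and nonempty: "ts \<noteq> []" and params: "set ts \<subseteq> {0..1}"
    and inscribed_max: "\<And>ts'. sorted ts' \<Longrightarrow> ts' \<noteq> [] \<Longrightarrow> set ts' \<subseteq> {0..1} \<Longrightarrow>
      polygon_length (map T ts') \<le> polygon_length (map T ts)"
begin

lemma path_image_subset_closed_polypath_samples:
  "path_image T \<subseteq> path_image (closed_polypath (map T ts))"
proof
  fix p assume "p \<in> path_image T"
  then obtain s where s: "s \<in> {0..1}" "p = T s" unfolding path_image_def by auto
  define ts1 where "ts1 = filter (\<lambda>t. t \<le> s) ts"
  define ts2 where "ts2 = filter (\<lambda>t. \<not> t \<le> s) ts"
  have split: "ts = ts1 @ ts2" unfolding ts1_def ts2_def by (rule sorted_split_filter_le[OF sorted])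
  have "sorted (ts1 @ s # ts2)"
    using sorted unfolding ts1_def ts2_def by (auto simp: sorted_append intro: sorted_wrt_filter)
  moreover have "set (ts1 @ s # ts2) \<subseteq> {0..1}" using params s split by auto
  ultimately have le:
    "polygon_length (map T ts1 @ p # map T ts2) \<le> polygon_length (map T ts1 @ map T ts2)"
    using inscribed_max[of "ts1 @ s # ts2"] s split by simp
  have qs: "map T ts = map T ts1 @ map T ts2" "map T ts \<noteq> []" using split nonempty by simp_all
  consider "ts1 = []" | "ts2 = []" | "ts1 \<noteq> []" "ts2 \<noteq> []" by blast
  then show "p \<in> path_image (closed_polypath (map T ts))"
  proof cases
    case 1
    then have "polygon_length (p # map T ts) \<le> polygon_length (map T ts)" using le qs by simp
    then show ?thesis
      using qs in_closing_segment_if_insertion_not_longer closing_segment_subset_closed_polypath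
      by blast
  next
    case 2
    then have "polygon_length (p # map T ts) \<le> polygon_length (map T ts)"
      using le qs polygon_length_rotate[of "map T ts" "[p]"] by simp
    then show ?thesis
      using qs in_closing_segment_if_insertion_not_longer closing_segment_subset_closed_polypath
      by blast
  next
    case 3
    then have "p \<in> closed_segment (last (map T ts1)) (hd (map T ts2))"
      using in_segment_if_insertion_not_longer[OF _ _ le] by simp
    then show ?thesis
      using closed_segment_subset_closed_polypath[OF qs(1)] 3 by auto
  qed
qed

lemma inner_edge_subset_path_image:
  assumes "Suc i < length ts"
  shows "closed_segment (T (ts ! i)) (T (ts ! Suc i)) \<subseteq> path_image T"
proof -
  define U where "U = take (Suc i) ts"
  define V where "V = drop (Suc i) ts"
  have UV: "ts = U @ V" "U \<noteq> []" "V \<noteq> []" using assms unfolding U_def V_def by auto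
  have ends: "last U = ts ! i" "hd V = ts ! Suc i"
    using assms unfolding U_def V_def by (simp_all add: take_Suc_conv_app_nth hd_drop_conv_nth)
  have ab: "ts ! i \<in> {0..1}" "ts ! Suc i \<in> {0..1}" "ts ! i \<le> ts ! Suc i"
    using assms params nth_mem[of i ts] nth_mem[of "Suc i" ts] sorted
    by (auto simp: sorted_iff_nth_mono simp del: nth_mem)
  define C where "C = T ` {ts ! i .. ts ! Suc i}"
  have "C \<subseteq> closed_segment (T (ts ! i)) (T (ts ! Suc i))"
  proof
    fix p assume "p \<in> C"
    then obtain s where s: "s \<in> {ts ! i .. ts ! Suc i}" "p = T s" unfolding C_def by auto
    have "sorted (U @ s # V)" using sorted_insert_between[of U V s] UV ends sorted s by simp
    moreover have "set (U @ s # V) \<subseteq> {0..1}" using params UV s ab by auto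
    ultimately have "polygon_length (map T U @ p # map T V) \<le> polygon_length (map T U @ map T V)"
      using inscribed_max[of "U @ s # V"] s UV by simp
    then show "p \<in> closed_segment (T (ts ! i)) (T (ts ! Suc i))"
      using in_segment_if_insertion_not_longer[of "map T U" "map T V" p] UV ends
      by (simp add: last_map hd_map)
  qed
  moreover have "connected C" unfolding C_def
    by (rule connected_continuous_image[OF continuous_on_subset[OF path[unfolded path_def]]])
      (use ab in auto)
  moreover have "T (ts ! i) \<in> C" "T (ts ! Suc i) \<in> C" unfolding C_def using ab by auto
  ultimately have "closed_segment (T (ts ! i)) (T (ts ! Suc i)) \<subseteq> C"
    using closed_segment_subset_if_connected by blast
  also have "C \<subseteq> path_image T" unfolding C_def path_image_def using ab by auto
  finally show ?thesis .
qed

lemma insertion_at_ends_not_longer: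
  assumes "s \<in> {last ts .. 1} \<union> {0 .. hd ts}"
  shows "polygon_length (T s # map T ts) \<le> polygon_length (map T ts)"
  using assms
proof
  assume s: "s \<in> {last ts .. 1}"
  have "\<forall>t\<in>set ts. t \<le> s" using s sorted_hd_le_last[OF sorted] by fastforce
  moreover have "0 \<le> s" using s params last_in_set[OF nonempty] by force
  ultimately have "sorted (ts @ [s])" "set (ts @ [s]) \<subseteq> {0..1}"
    using s sorted params by (auto simp: sorted_append)
  then have "polygon_length (map T ts @ [T s]) \<le> polygon_length (map T ts)"
    using inscribed_max[of "ts @ [s]"] by simp
  then show ?thesis using polygon_length_rotate[of "map T ts" "[T s]"] by simp
next
  assume s: "s \<in> {0 .. hd ts}"
  have "\<forall>t\<in>set ts. s \<le> t" using s sorted_hd_le_last[OF sorted] by fastforce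
  moreover have "s \<le> 1" using s params hd_in_set[OF nonempty] by force
  ultimately have "sorted (s # ts)" "set (s # ts) \<subseteq> {0..1}" using s sorted params by auto
  then show ?thesis using inscribed_max[of "s # ts"] by simp
qed

text \<open>The closing edge is covered by the two end pieces of the curve, glued at T 0 = T 1.\<close>

lemma closing_edge_subset_path_image:
  "closed_segment (T (last ts)) (T (hd ts)) \<subseteq> path_image T"
proof -
  have ab: "last ts \<in> {0..1}" "hd ts \<in> {0..1}"
    using params last_in_set[OF nonempty] hd_in_set[OF nonempty] by auto
  define C where "C = T ` {last ts .. 1} \<union> T ` {0 .. hd ts}"
  have "C \<subseteq> closed_segment (T (last ts)) (T (hd ts))"
  proof
    fix p assume "p \<in> C"
    then obtain s where "s \<in> {last ts .. 1} \<union> {0 .. hd ts}" "p = T s" unfolding C_def by blast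
    then show "p \<in> closed_segment (T (last ts)) (T (hd ts))"
      using insertion_at_ends_not_longer in_closing_segment_if_insertion_not_longer[of "map T ts"]
        nonempty by (simp add: last_map hd_map)
  qed
  moreover have "connected C" unfolding C_def
  proof (rule connected_Un)
    show "connected (T ` {last ts..1})" "connected (T ` {0..hd ts})"
      by (rule connected_continuous_image[OF continuous_on_subset[OF path[unfolded path_def]]];
          use ab in auto)+
    have "T 1 \<in> T ` {last ts..1}" "T 0 \<in> T ` {0..hd ts}" using ab by auto
    then show "T ` {last ts..1} \<inter> T ` {0..hd ts} \<noteq> {}"
      using closed by (auto simp: pathfinish_def pathstart_def)
  qed
  moreover have "T (last ts) \<in> C" "T (hd ts) \<in> C" unfolding C_def using ab by auto
  ultimately have "closed_segment (T (last ts)) (T (hd ts)) \<subseteq> C"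
    using closed_segment_subset_if_connected by blast
  also have "C \<subseteq> path_image T" unfolding C_def path_image_def using ab by auto
  finally show ?thesis .
qed

lemma path_image_eq_closed_polypath_samples:
  "path_image T = path_image (closed_polypath (map T ts))"
proof
  let ?qs = "map T ts"
  have "closed_segment ((?qs @ [hd ?qs]) ! i) ((?qs @ [hd ?qs]) ! Suc i) \<subseteq> path_image T"
    if "i < length ts" for i
  proof (cases "Suc i < length ts")
    case True
    then show ?thesis using inner_edge_subset_path_image[OF True] by (simp add: nth_append)
  next
    case False
    then have "i = length ts - 1" "Suc i = length ts" using that by simp_all
    then show ?thesis using closing_edge_subset_path_image nonempty
      by (simp add: nth_append last_conv_nth hd_map)
  qed
  then show "path_image (closed_polypath ?qs) \<subseteq> path_image T"
    using path_image_closed_polypath[of ?qs] nonempty by auto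
qed (rule path_image_subset_closed_polypath_samples)

end

section \<open>Optimal tours\<close>

lemma is_tour_closed_polypath:
  assumes "r \<noteq> []" "\<forall>i<n. \<exists>x\<in>set r. x \<in> P i"
  shows "is_tour n P (closed_polypath r)"
  unfolding is_tour_def
proof (intro conjI)
  show "path (closed_polypath r)" unfolding closed_polypath_def by (rule path_polypath)
  show "pathfinish (closed_polypath r) = pathstart (closed_polypath r)"
    unfolding closed_polypath_def using assms(1)
    by (simp add: pathstart_polypath pathfinish_polypath)
  show "\<forall>i<n. path_image (closed_polypath r) \<inter> P i \<noteq> {}"
    using assms(2) vertex_in_path_image_closed_polypath by blast
qed

lemma optimal_tour_le_polygon_length:
  assumes "optimal_tour n P T" "r \<noteq> []" "\<forall>i<n. \<exists>x\<in>set r. x \<in> P i"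
  shows "curve_length T \<le> ereal (polygon_length r)"
proof -
  have "curve_length T \<le> curve_length (closed_polypath r)"
    using assms is_tour_closed_polypath unfolding optimal_tour_def by blast
  also have "\<dots> \<le> ereal (polygon_length r)"
    unfolding closed_polypath_def polygon_length_def by (rule curve_length_polypath_le)
  finally show ?thesis .
qed

lemma tour_visiting_parameters:
  assumes "is_tour n P T" "\<And>i j. i < n \<Longrightarrow> j < n \<Longrightarrow> i \<noteq> j \<Longrightarrow> P i \<inter> P j = {}"
  obtains ts where "sorted ts" "length ts = n" "set ts \<subseteq> {0..1}" "distinct (map T ts)"
    "\<forall>i<n. \<exists>t\<in>set ts. T t \<in> P i"
proof -
  have "\<forall>i<n. \<exists>s. s \<in> {0..1} \<and> T s \<in> P i"
    using assms(1) unfolding is_tour_def path_image_def by blast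
  then obtain f where f: "\<And>i. i < n \<Longrightarrow> f i \<in> {0..1} \<and> T (f i) \<in> P i" by metis
  have inj: "i = j" if "i < n" "j < n" "T (f i) = T (f j)" for i j
    using assms(2)[of i j] f[of i] f[of j] that by auto
  define ts where "ts = sorted_list_of_set (f ` {..<n})"
  have "inj_on f {..<n}" using inj unfolding inj_on_def by auto
  then have "length ts = n" unfolding ts_def by (simp add: card_image)
  moreover have "inj_on T (set ts)" unfolding ts_def inj_on_def using inj by auto
  then have "distinct (map T ts)" unfolding ts_def by (simp add: distinct_map)
  moreover have "set ts = f ` {..<n}" unfolding ts_def by simp
  then have "set ts \<subseteq> {0..1}" "\<forall>i<n. \<exists>t\<in>set ts. T t \<in> P i" using f by auto
  moreover have "sorted ts" unfolding ts_def by simp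
  ultimately show ?thesis using that by blast
qed

lemma collinear_closed_polypath_segment:
  assumes "qs \<noteq> []" "collinear (set qs)"
  obtains a b where "path_image (closed_polypath qs) = path_image (closed_polypath [a, b])"
proof -
  let ?S = "path_image (closed_polypath qs)"
  have "?S \<subseteq> convex hull (set qs)"
  proof -
    have vertex: "(qs @ [hd qs]) ! j \<in> set qs" if "j \<le> length qs" for j
      using that assms(1) by (auto simp: nth_append)
    have "closed_segment ((qs @ [hd qs]) ! i) ((qs @ [hd qs]) ! Suc i) \<subseteq> convex hull (set qs)"
      if "i < length qs" for i
      by (rule closed_segment_subset) (use that vertex in \<open>auto intro: hull_inc\<close>)
    then show ?thesis using path_image_closed_polypath[OF assms(1)] by auto
  qed
  then have "collinear ?S"
    using assms(2) collinear_affine_hull_collinear convex_hull_subset_affine_hull collinear_subset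
    by (metis order_trans)
  moreover have "compact ?S" "connected ?S" "?S \<noteq> {}"
    using path_polypath by (auto simp: closed_polypath_def compact_path_image connected_path_image)
  ultimately obtain a b where "?S = closed_segment a b"
    using compact_convex_collinear_segment_alt by blast
  moreover have "path_image (closed_polypath [a, b]) = closed_segment a b"
    using path_image_closed_polypath[of "[a, b]"]
    by (auto simp: lessThan_Suc closed_segment_commute)
  ultimately show ?thesis using that[of a b] by simp
qed

lemma optimal_tour_closed_polypath:
  assumes "n \<ge> 1" "\<And>i j. i < n \<Longrightarrow> j < n \<Longrightarrow> i \<noteq> j \<Longrightarrow> P i \<inter> P j = {}"
    and "optimal_tour n P T"
  obtains qs where "length qs = n" "distinct qs" "path_image T = path_image (closed_polypath qs)"
    "\<forall>r. set qs \<subseteq> set r \<longrightarrow> polygon_length qs \<le> polygon_length r"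
proof -
  have tour: "is_tour n P T" using assms(3) by (simp add: optimal_tour_def)
  then have path: "path T" and closed: "pathfinish T = pathstart T" by (simp_all add: is_tour_def)
  obtain ts where ts: "sorted ts" "length ts = n" "set ts \<subseteq> {0..1}" "distinct (map T ts)"
    and visits: "\<forall>i<n. \<exists>t\<in>set ts. T t \<in> P i"
    using tour_visiting_parameters[OF tour assms(2)] by blast
  define qs where "qs = map T ts"
  have "ts \<noteq> []" using ts(2) assms(1) by auto
  have upper: "curve_length T \<le> ereal (polygon_length r)" if "set qs \<subseteq> set r" for r
  proof -
    have "r \<noteq> []" using that \<open>ts \<noteq> []\<close> unfolding qs_def by auto
    moreover have "\<forall>i<n. \<exists>x\<in>set r. x \<in> P i"
    proof (intro allI impI)
      fix i assume "i < n"
      then obtain t where "t \<in> set ts" "T t \<in> P i" using visits by blast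
      then show "\<exists>x\<in>set r. x \<in> P i" using that unfolding qs_def by auto
    qed
    ultimately show ?thesis by (rule optimal_tour_le_polygon_length[OF assms(3)])
  qed
  have lower: "ereal (polygon_length (map T ts')) \<le> curve_length T"
    if "sorted ts'" "ts' \<noteq> []" "set ts' \<subseteq> {0..1}" for ts'
    using polygon_length_le_curve_length[OF closed that] .
  have "polygon_length (map T ts') \<le> polygon_length qs"
    if "sorted ts'" "ts' \<noteq> []" "set ts' \<subseteq> {0..1}" for ts'
    using order_trans[OF lower[OF that] upper[of qs]] by simp
  then have image: "path_image T = path_image (closed_polypath qs)"
    using path_image_eq_closed_polypath_samples[OF path closed ts(1) \<open>ts \<noteq> []\<close> ts(3)]
    unfolding qs_def by blast
  have shortest: "polygon_length qs \<le> polygon_length r" if "set qs \<subseteq> set r" for r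
    using order_trans[OF lower[OF ts(1) \<open>ts \<noteq> []\<close> ts(3)] upper[OF that]]
    unfolding qs_def by simp
  have "length qs = n" "distinct qs" using ts by (simp_all add: qs_def)
  then show ?thesis using image shortest by (intro that) auto
qed

theorem lemma2p1:
  fixes n :: nat and P :: "nat \<Rightarrow> (real^2) set" and \<alpha> :: real and T :: "real \<Rightarrow> real^2"
  assumes "n \<ge> 1"
    and "\<alpha> > 0"
    and "\<And>i. i < n \<Longrightarrow> simple_polygon (P i)"
    and "\<And>i. i < n \<Longrightarrow> connected (P i)"
    and "\<And>i. i < n \<Longrightarrow> fat \<alpha> (P i)"
    and "\<And>i j. i < n \<Longrightarrow> j < n \<Longrightarrow> i \<noteq> j \<Longrightarrow> P i \<inter> P j = {}"
    and "optimal_tour n P T"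
  shows "\<exists>vs. 1 \<le> length vs \<and> length vs \<le> n \<and>
           path_image T = path_image (closed_polypath vs) \<and>
           (length vs \<ge> 3 \<longrightarrow> simple_polygon_curve vs)"
proof -
  obtain qs where qs: "length qs = n" "distinct qs" "path_image T = path_image (closed_polypath qs)"
    and shortest: "\<forall>r. set qs \<subseteq> set r \<longrightarrow> polygon_length qs \<le> polygon_length r"
    using optimal_tour_closed_polypath[OF assms(1,6,7)] by blast
  consider "n \<le> 2" | "n \<ge> 3" "collinear (set qs)" | "n \<ge> 3" "\<not> collinear (set qs)" by linarith
  then show ?thesis
  proof cases
    case 1
    then show ?thesis using qs assms(1) by (intro exI[of _ qs]) auto
  next
    case 2
    then have "qs \<noteq> []" using qs(1) by auto
    then obtain a b where "path_image (closed_polypath qs) = path_image (closed_polypath [a, b])"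
      using collinear_closed_polypath_segment 2(2) by blast
    then show ?thesis using qs 2 by (intro exI[of _ "[a, b]"]) auto
  next
    case 3
    then have "simple_path (closed_polypath qs)"
      using shortest_closed_polypath_simple[of qs] qs shortest by simp
    then show ?thesis using qs 3 by (intro exI[of _ qs]) (simp add: simple_polygon_curve_def)
  qed
qed

end
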